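(* Let $\Gamma=G_3$ be the graph with two vertices $V_\alpha,V_\beta$ joined by exactly three edges (no loops), with degrees $d_\alpha,d_\beta\in\mathbb{Z}$. The family $\mathcal{F}(G_3,(d_\alpha,d_\beta))$ is jumping if and only if $0\le d_\alpha\le 1$ and $0\le d_\beta\le 1$.
   Context: Let $\Gamma$ be a connected graph (loops and multiple edges allowed) with vertices $V_1,\dots,V_n$ and integers $d_1,\dots,d_n$. A nodal curve with dual graph $\Gamma$ and rational components is a curve $C$ obtained from the disjoint union of copies $\mathbb{P}^1_{V_i}$ of $\mathbb{P}^1$ by choosing, for each edge of $\Gamma$, a point on each of its endpoint copies (all chosen points distinct) and identifying these two points to a node. A line bundle on $C$ is equivalent to line bundles on each $\mathbb{P}^1_{V_i}$ together with, at each node, an identification of the two fibres (descent data, a scalar in $\mathbb{C}^*$ after trivialising); global sections are tuples of sections on the $\mathbb{P}^1$'s compatible with these identifications. The family $\mathcal{F}(\Gamma,(d_i))$ consists of all pairs $(C,L)$ with $C$ such a curve (any choice of node positions) and $L$ a line bundle on $C$ whose pullback to $\mathbb{P}^1_{V_i}$ has degree $d_i$ for all $i$ (any descent data). $\Gamma$ with degrees $(d_i)$ is called jumping if $h^0(C,L)$ is not constant on $\mathcal{F}(\Gamma,(d_i))$, and non-jumping otherwise. *)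

theory Defs
  imports "HOL-Computational_Algebra.Polynomial" "HOL-Library.Product_Plus"
begin

text \<open>Global sections of O(d) on P^1: binary forms of degree d in (x,y), encoded by the
  dehomogenised univariate polynomial (coefficient of x^k y^(d-k) is coeff f k).
  For d < 0 the only section is 0.\<close>
definition forms :: "int \<Rightarrow> complex poly set" where
  "forms d = {f. if d < 0 then f = 0 else degree f \<le> nat d}"

text \<open>Value of the binary form of degree d at the representative (a,b) of a point of P^1
  (this trivialises the fibre of O(d) at (a:b)).\<close>
definition form_eval :: "int \<Rightarrow> complex poly \<Rightarrow> complex \<times> complex \<Rightarrow> complex" where
  "form_eval d f v = (\<Sum>k\<le>nat d. coeff f k * fst v ^ k * snd v ^ (nat d - k))"

text \<open>Points of P^1 given by nonzero representatives; distinctness in P^1.\<close>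
definition proj_distinct :: "complex \<times> complex \<Rightarrow> complex \<times> complex \<Rightarrow> bool" where
  "proj_distinct v w \<longleftrightarrow> fst v * snd w \<noteq> snd v * fst w"

text \<open>A member of the family F(G_3,(da,db)): node positions p i on P^1_alpha, q i on P^1_beta
  (i < 3, one per edge, distinct on each component) and descent scalars lam i \<noteq> 0.\<close>
definition G3_config :: "(nat \<Rightarrow> complex \<times> complex) \<Rightarrow> (nat \<Rightarrow> complex \<times> complex)
    \<Rightarrow> (nat \<Rightarrow> complex) \<Rightarrow> bool" where
  "G3_config p q lam \<longleftrightarrow>
     (\<forall>i<3. p i \<noteq> (0,0) \<and> q i \<noteq> (0,0) \<and> lam i \<noteq> 0) \<and>
     (\<forall>i<3. \<forall>j<3. i \<noteq> j \<longrightarrow> proj_distinct (p i) (p j) \<and> proj_distinct (q i) (q j))"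

text \<open>Global sections of the line bundle: compatible pairs of sections on the two components.\<close>
definition G3_sections :: "int \<Rightarrow> int \<Rightarrow> (nat \<Rightarrow> complex \<times> complex) \<Rightarrow> (nat \<Rightarrow> complex \<times> complex)
    \<Rightarrow> (nat \<Rightarrow> complex) \<Rightarrow> (complex poly \<times> complex poly) set" where
  "G3_sections da db p q lam =
     {(f, g). f \<in> forms da \<and> g \<in> forms db \<and>
        (\<forall>i<3. form_eval da f (p i) = lam i * form_eval db g (q i))}"

definition pair_smult :: "complex \<Rightarrow> complex poly \<times> complex poly \<Rightarrow> complex poly \<times> complex poly" where
  "pair_smult c x = (smult c (fst x), smult c (snd x))"

definition G3_h0 :: "int \<Rightarrow> int \<Rightarrow> (nat \<Rightarrow> complex \<times> complex) \<Rightarrow> (nat \<Rightarrow> complex \<times> complex)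
    \<Rightarrow> (nat \<Rightarrow> complex) \<Rightarrow> nat" where
  "G3_h0 da db p q lam = vector_space.dim pair_smult (G3_sections da db p q lam)"

definition G3_jumping :: "int \<Rightarrow> int \<Rightarrow> bool" where
  "G3_jumping da db \<longleftrightarrow>
     (\<exists>p q lam p' q' lam'. G3_config p q lam \<and> G3_config p' q' lam' \<and>
        G3_h0 da db p q lam \<noteq> G3_h0 da db p' q' lam')"

end

theory Submission
  imports Defs
begin

text \<open>A section is a pair \<open>(f, g)\<close> of binary forms of degrees \<open>d\<^sub>\<alpha>, d\<^sub>\<beta>\<close> with
  \<open>f(p\<^sub>i) = \<lambda>\<^sub>i g(q\<^sub>i)\<close> at the three nodes. If \<open>d\<^sub>\<alpha> \<ge> 2\<close>, Lagrange interpolation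
  at the nodes \<open>p\<^sub>i\<close> produces, linearly in \<open>g\<close>, a form \<open>s(g)\<close> with these values, and the
  admissible \<open>f\<close> are exactly \<open>s(g) + N h\<close> with \<open>N\<close> the cubic vanishing at the nodes and
  \<open>h\<close> of degree \<open>d\<^sub>\<alpha> - 3\<close>; so \<open>h\<^sup>0 = dim (H\<^sup>0(O(d\<^sub>\<alpha> - 3)) \<oplus> H\<^sup>0(O(d\<^sub>\<beta>)))\<close> for every
  member of the family. If \<open>d\<^sub>\<alpha> < 0\<close>, then \<open>f = 0\<close> and \<open>g\<close> ranges over the multiples of the cubic
  vanishing at the \<open>q\<^sub>i\<close> by forms of degree \<open>d\<^sub>\<beta> - 3\<close>.
  Exchanging the components covers \<open>d\<^sub>\<beta>\<close>. For \<open>d\<^sub>\<alpha>, d\<^sub>\<beta> \<in> {0, 1}\<close> the nodes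
  \<open>0, \<infinity>, 1\<close> on both components with descent data \<open>(1, 1, 1)\<close> resp. \<open>(1, 1, 2)\<close> give
  different \<open>h\<^sup>0\<close>.\<close>

section \<open>Binary forms\<close>

lemma smult_sum_right: "smult c (\<Sum>i\<in>I. f i) = (\<Sum>i\<in>I. smult c (f i))"
  by (induction I rule: infinite_finite_induct) (simp_all add: smult_add_right)

lemma zero_in_forms [simp]: "0 \<in> forms d"
  by (simp add: forms_def)

lemma forms_negative: "d < 0 \<Longrightarrow> forms d = {0}"
  by (auto simp: forms_def)

lemma forms_nonneg_iff: "0 \<le> d \<Longrightarrow> f \<in> forms d \<longleftrightarrow> degree f \<le> nat d"
  by (simp add: forms_def)

lemma forms_add: "f \<in> forms d \<Longrightarrow> g \<in> forms d \<Longrightarrow> f + g \<in> forms d"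
  by (auto simp: forms_def intro: order.trans[OF degree_add_le])

lemma forms_smult: "f \<in> forms d \<Longrightarrow> smult c f \<in> forms d"
  by (auto simp: forms_def intro: order.trans[OF degree_smult_le])

lemma forms_diff: "f \<in> forms d \<Longrightarrow> g \<in> forms d \<Longrightarrow> f - g \<in> forms d"
  using forms_add[of f d "smult (-1) g"] forms_smult[of g d "-1"] by simp

lemma forms_sum: "(\<And>i. i \<in> I \<Longrightarrow> f i \<in> forms d) \<Longrightarrow> (\<Sum>i\<in>I. f i) \<in> forms d"
  by (induction I rule: infinite_finite_induct) (auto intro: forms_add)

lemma forms_mult: "f \<in> forms d \<Longrightarrow> g \<in> forms e \<Longrightarrow> f * g \<in> forms (d + e)"
proof (cases "d < 0 \<or> e < 0")
  case True
  then show "f \<in> forms d \<Longrightarrow> g \<in> forms e \<Longrightarrow> f * g \<in> forms (d + e)"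
    by (auto simp: forms_negative)
next
  case False
  assume "f \<in> forms d" "g \<in> forms e"
  with False have "degree f + degree g \<le> nat (d + e)"
    by (simp add: forms_nonneg_iff nat_add_distrib)
  with False show "f * g \<in> forms (d + e)"
    by (simp add: forms_nonneg_iff order.trans[OF degree_mult_le])
qed

lemma forms_prod:
  "(\<And>i. i \<in> I \<Longrightarrow> f i \<in> forms (d i)) \<Longrightarrow> (\<Prod>i\<in>I. f i) \<in> forms (\<Sum>i\<in>I. d i)"
  by (induction I rule: infinite_finite_induct) (simp_all add: forms_nonneg_iff forms_mult)

lemma forms_power: "f \<in> forms d \<Longrightarrow> f ^ m \<in> forms (int m * d)"
  using forms_prod[of "{..<m}" "\<lambda>_. f" "\<lambda>_. d"] by simp

lemma form_eval_0 [simp]: "form_eval d 0 v = 0"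
  by (simp add: form_eval_def)

lemma form_eval_add: "form_eval d (f + g) v = form_eval d f v + form_eval d g v"
  by (simp add: form_eval_def algebra_simps sum.distrib)

lemma form_eval_smult: "form_eval d (smult c f) v = c * form_eval d f v"
  by (simp add: form_eval_def algebra_simps sum_distrib_left)

lemma form_eval_diff: "form_eval d (f - g) v = form_eval d f v - form_eval d g v"
  by (simp add: form_eval_def algebra_simps sum_subtractf)

lemma form_eval_sum: "form_eval d (\<Sum>i\<in>I. f i) v = (\<Sum>i\<in>I. form_eval d (f i) v)"
  by (induction I rule: infinite_finite_induct) (auto simp: form_eval_add)

lemma form_eval_at_infinity: "form_eval d f (a, 0) = coeff f (nat d) * a ^ nat d"
proof -
  have "form_eval d f (a, 0) = (\<Sum>k\<in>{nat d}. coeff f k * a ^ k * 0 ^ (nat d - k))"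
    unfolding form_eval_def fst_conv snd_conv
    by (rule sum.mono_neutral_right) (auto simp: zero_power)
  then show ?thesis by simp
qed

lemma form_eval_affine:
  assumes "0 \<le> d" "f \<in> forms d" "b \<noteq> 0"
  shows "form_eval d f (a, b) = b ^ nat d * poly f (a / b)"
proof -
  have "degree f \<le> nat d"
    using assms(1,2) by (simp add: forms_nonneg_iff)
  then have "poly f (a / b) = (\<Sum>k\<le>nat d. coeff f k * (a / b) ^ k)"
    by (simp add: poly_altdef coeff_eq_0 sum.mono_neutral_left)
  moreover have "b ^ nat d * (a / b) ^ k = a ^ k * b ^ (nat d - k)" if "k \<le> nat d" for k
    using that assms(3) by (simp add: power_divide field_simps flip: power_add)
  ultimately show ?thesis
    by (simp add: form_eval_def sum_distrib_left algebra_simps)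
qed

lemma coeff_mult_at_degree_bounds:
  assumes "degree f \<le> m" "degree g \<le> n"
  shows "coeff (f * g) (m + n) = coeff f m * coeff g n"
proof (cases "degree f = m \<and> degree g = n")
  case True
  then show ?thesis using coeff_mult_degree_sum[of f g] by simp
next
  case False
  with assms have "degree (f * g) < m + n" "degree f < m \<or> degree g < n"
    using degree_mult_le[of f g] by auto
  then show ?thesis by (auto simp: coeff_eq_0)
qed

lemma form_eval_mult:
  assumes f: "f \<in> forms d" and g: "g \<in> forms e"
  shows "form_eval (d + e) (f * g) v = form_eval d f v * form_eval e g v"
proof (cases "d < 0 \<or> e < 0")
  case True
  with f g show ?thesis by (auto simp: forms_negative)
next
  case False
  then have nat_sum: "nat (d + e) = nat d + nat e" by (simp add: nat_add_distrib)
  obtain a b where v: "v = (a, b)" by fastforce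
  show ?thesis
  proof (cases "b = 0")
    case True
    with f g False show ?thesis
      by (simp add: v nat_sum form_eval_at_infinity forms_nonneg_iff
          coeff_mult_at_degree_bounds power_add)
  next
    case False
    with \<open>\<not> (d < 0 \<or> e < 0)\<close> f g show ?thesis
      by (simp add: v nat_sum form_eval_affine forms_mult power_add)
  qed
qed

lemma form_eval_prod:
  "(\<And>i. i \<in> I \<Longrightarrow> f i \<in> forms (d i)) \<Longrightarrow>
    form_eval (\<Sum>i\<in>I. d i) (\<Prod>i\<in>I. f i) v = (\<Prod>i\<in>I. form_eval (d i) (f i) v)"
  by (induction I rule: infinite_finite_induct)
    (simp_all add: form_eval_def[of 0] form_eval_mult forms_prod)

lemma form_eval_power:
  "f \<in> forms d \<Longrightarrow> form_eval (int m * d) (f ^ m) v = form_eval d f v ^ m"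
  using form_eval_prod[of "{..<m}" "\<lambda>_. f" "\<lambda>_. d"] by simp

definition linform :: "complex \<times> complex \<Rightarrow> complex poly" where
  "linform v = [:- fst v, snd v:]"

lemma linform_in_forms: "linform v \<in> forms 1"
  by (simp add: linform_def forms_def)

lemma linform_nonzero: "v \<noteq> (0, 0) \<Longrightarrow> linform v \<noteq> 0"
  by (cases v) (auto simp: linform_def)

lemma form_eval_linform: "form_eval 1 (linform v) w = snd v * fst w - fst v * snd w"
  by (simp add: linform_def form_eval_def)

lemma form_eval_linform_eq_0_iff:
  "form_eval 1 (linform v) w = 0 \<longleftrightarrow> \<not> proj_distinct v w"
  by (auto simp: form_eval_linform proj_distinct_def ac_simps)

lemma linform_dvd_form:
  assumes f: "f \<in> forms d" and v: "v \<noteq> (0, 0)" and root: "form_eval d f v = 0"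
  shows "\<exists>h \<in> forms (d - 1). f = linform v * h"
proof (cases "f = 0")
  case True
  then show ?thesis by (intro bexI[of _ 0]) auto
next
  case False
  then have d: "0 \<le> d" and deg: "degree f \<le> nat d"
    using f by (auto simp: forms_def split: if_splits)
  obtain a b where ab: "v = (a, b)" by fastforce
  show ?thesis
  proof (cases "b = 0")
    case True
    with v ab have "a \<noteq> 0" by auto
    with root ab True have "coeff f (nat d) = 0" by (simp add: form_eval_at_infinity)
    with False deg have "degree f < nat d"
      by (metis le_neq_implies_less leading_coeff_0_iff)
    then have "degree f \<le> nat (d - 1)" "\<not> d < 1" by linarith+
    then have "smult (- 1 / a) f \<in> forms (d - 1)" by (simp add: forms_def)
    moreover have "f = linform v * smult (- 1 / a) f"
      using \<open>a \<noteq> 0\<close> ab True by (simp add: linform_def)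
    ultimately show ?thesis by blast
  next
    case b: False
    with root ab d f have "poly f (a / b) = 0" by (simp add: form_eval_affine)
    then obtain k where k: "f = [:- (a / b), 1:] * k"
      by (auto simp: poly_eq_0_iff_dvd elim: dvdE)
    with False have "degree f = 1 + degree k"
      using degree_mult_eq[of "[:- (a / b), 1:]" k] by fastforce
    with deg have "degree k \<le> nat (d - 1)" "\<not> d < 1" by linarith+
    then have "smult (1 / b) k \<in> forms (d - 1)" by (simp add: forms_def)
    moreover have "linform v = smult b [:- (a / b), 1:]"
      using ab b by (simp add: linform_def)
    then have "linform v * smult (1 / b) k = smult (1 / b * b) ([:- (a / b), 1:] * k)"
      by (simp only: mult_smult_left mult_smult_right smult_smult)
    then have "f = linform v * smult (1 / b) k"
      using k b by simp
    ultimately show ?thesis by blast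
  qed
qed

section \<open>Forms vanishing at given points\<close>

definition distinct_points :: "(nat \<Rightarrow> complex \<times> complex) \<Rightarrow> nat \<Rightarrow> bool" where
  "distinct_points x n \<longleftrightarrow>
     (\<forall>i<n. x i \<noteq> (0, 0)) \<and> (\<forall>i<n. \<forall>j<n. i \<noteq> j \<longrightarrow> proj_distinct (x i) (x j))"

definition node_form :: "(nat \<Rightarrow> complex \<times> complex) \<Rightarrow> nat \<Rightarrow> complex poly" where
  "node_form x n = (\<Prod>i<n. linform (x i))"

definition vanishing_forms ::
    "int \<Rightarrow> (nat \<Rightarrow> complex \<times> complex) \<Rightarrow> nat \<Rightarrow> complex poly set" where
  "vanishing_forms d x n = {f \<in> forms d. \<forall>i<n. form_eval d f (x i) = 0}"

lemma node_form_in_forms: "node_form x n \<in> forms (int n)"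
  using forms_prod[of "{..<n}" "\<lambda>i. linform (x i)" "\<lambda>_. 1"]
  by (simp add: node_form_def linform_in_forms)

lemma form_eval_node_form:
  "form_eval (int n) (node_form x n) w = (\<Prod>i<n. form_eval 1 (linform (x i)) w)"
  using form_eval_prod[of "{..<n}" "\<lambda>i. linform (x i)" "\<lambda>_. 1"]
  by (simp add: node_form_def linform_in_forms)

lemma node_form_nonzero: "distinct_points x n \<Longrightarrow> node_form x n \<noteq> 0"
  by (simp add: distinct_points_def node_form_def linform_nonzero)

lemma form_eval_node_form_mult:
  assumes "h \<in> forms (d - int n)"
  shows "form_eval d (node_form x n * h) w =
    form_eval (int n) (node_form x n) w * form_eval (d - int n) h w"
  using form_eval_mult[OF node_form_in_forms[of x n] assms] by simp

lemma node_form_mult_in_forms: "h \<in> forms (d - int n) \<Longrightarrow> node_form x n * h \<in> forms d"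
  using forms_mult[OF node_form_in_forms[of x n]] by fastforce

lemma node_form_dvd_vanishing_form:
  assumes "distinct_points x n" "f \<in> vanishing_forms d x n"
  shows "\<exists>h \<in> forms (d - int n). f = node_form x n * h"
  using assms
proof (induction n)
  case 0
  then show ?case by (simp add: node_form_def vanishing_forms_def)
next
  case (Suc n)
  then have pts: "distinct_points x n" and "x n \<noteq> (0, 0)"
    by (auto simp: distinct_points_def)
  moreover from Suc.prems have "f \<in> vanishing_forms d x n" by (simp add: vanishing_forms_def)
  ultimately obtain h where h: "h \<in> forms (d - int n)" "f = node_form x n * h"
    using Suc.IH by blast
  have "\<forall>i<n. proj_distinct (x i) (x n)"
    using Suc.prems by (simp add: distinct_points_def)
  then have "form_eval (int n) (node_form x n) (x n) \<noteq> 0"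
    by (simp add: form_eval_node_form form_eval_linform_eq_0_iff)
  moreover have "form_eval d f (x n) = 0"
    using Suc.prems by (simp add: vanishing_forms_def)
  ultimately have "form_eval (d - int n) h (x n) = 0"
    using h by (simp add: form_eval_node_form_mult)
  then obtain h' where "h' \<in> forms (d - int n - 1)" "h = linform (x n) * h'"
    using linform_dvd_form[OF h(1) \<open>x n \<noteq> (0, 0)\<close>] by blast
  moreover have "node_form x (Suc n) = node_form x n * linform (x n)"
    by (simp add: node_form_def)
  ultimately show ?case
    using h(2) by (intro bexI[of _ h']) (auto simp: algebra_simps)
qed

lemma vanishing_forms_eq_image:
  assumes "distinct_points x n"
  shows "vanishing_forms d x n = (\<lambda>h. node_form x n * h) ` forms (d - int n)"
proof (intro equalityI subsetI)
  fix f assume "f \<in> vanishing_forms d x n"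
  then show "f \<in> (\<lambda>h. node_form x n * h) ` forms (d - int n)"
    using node_form_dvd_vanishing_form[OF assms] by blast
next
  fix f assume "f \<in> (\<lambda>h. node_form x n * h) ` forms (d - int n)"
  moreover have "form_eval (int n) (node_form x n) (x i) = 0" if "i < n" for i
    using that by (auto simp: form_eval_node_form form_eval_linform intro!: bexI[of _ i])
  ultimately show "f \<in> vanishing_forms d x n"
    by (auto simp: vanishing_forms_def node_form_mult_in_forms form_eval_node_form_mult)
qed

lemma exists_proj_distinct:
  assumes "v \<noteq> (0, 0)"
  shows "\<exists>w. proj_distinct w v"
proof (cases "snd v = 0")
  case True
  with assms show ?thesis
    by (intro exI[of _ "(0, 1)"]) (auto simp: proj_distinct_def prod_eq_iff)
next
  case False
  then show ?thesis by (intro exI[of _ "(1, 0)"]) (simp add: proj_distinct_def)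
qed

lemma interpolating_form_exists:
  assumes pts: "distinct_points x n" and i: "i < n" and d: "int n \<le> d + 1"
  shows "\<exists>e \<in> forms d. \<forall>j<n. form_eval d e (x j) = (if j = i then 1 else 0)"
proof -
  have "x i \<noteq> (0, 0)"
    using pts i by (simp add: distinct_points_def)
  then obtain w where w: "proj_distinct w (x i)"
    using exists_proj_distinct by blast
  define m where "m = nat (d + 1 - int n)"
  define others where "others = {..<n} - {i}"
  define e where "e = (\<Prod>j\<in>others. linform (x j)) * linform w ^ m"
  have card_others: "card others = n - 1" and d_split: "d = int (card others) + int m * 1"
    using i d by (simp_all add: others_def m_def)
  have prod_forms: "(\<Prod>j\<in>others. linform (x j)) \<in> forms (int (card others))"
    using forms_prod[of others "\<lambda>j. linform (x j)" "\<lambda>_. 1"] by (simp add: linform_in_forms)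
  have power_forms: "linform w ^ m \<in> forms (int m * 1)"
    by (rule forms_power[OF linform_in_forms])
  have e_forms: "e \<in> forms d"
    unfolding e_def d_split by (rule forms_mult[OF prod_forms power_forms])
  have e_eval: "form_eval d e v =
      (\<Prod>j\<in>others. form_eval 1 (linform (x j)) v) * form_eval 1 (linform w) v ^ m" for v
    unfolding e_def d_split form_eval_mult[OF prod_forms power_forms]
      form_eval_power[OF linform_in_forms]
    using form_eval_prod[of others "\<lambda>j. linform (x j)" "\<lambda>_. 1"]
    by (simp add: linform_in_forms)
  define c where "c = form_eval d e (x i)"
  have "c \<noteq> 0"
    using pts w i by (auto simp: c_def e_eval others_def distinct_points_def form_eval_linform_eq_0_iff)
  moreover have "form_eval d e (x j) = 0" if "j < n" "j \<noteq> i" for j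
    using that by (auto simp: e_eval others_def form_eval_linform intro!: bexI[of _ j])
  ultimately have "\<forall>j<n. form_eval d (smult (1 / c) e) (x j) = (if j = i then 1 else 0)"
    by (simp add: form_eval_smult c_def)
  with e_forms show ?thesis by (blast intro: forms_smult)
qed

lemma lagrange_basis_exists:
  assumes "distinct_points x n" "int n \<le> d + 1"
  shows "\<exists>E. \<forall>i<n. E i \<in> forms d \<and> (\<forall>j<n. form_eval d (E i) (x j) = (if j = i then 1 else 0))"
  using interpolating_form_exists[OF assms(1) _ assms(2)] by metis

section \<open>The space of pairs of forms\<close>

lemma (in vector_space_pair) dim_image_eq_of_inj_on:
  assumes lin: "Vector_Spaces.linear s1 s2 f" and inj: "inj_on f (vs1.span S)"
  shows "vs2.dim (f ` S) = vs1.dim S"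
proof -
  interpret f: Vector_Spaces.linear s1 s2 f by (rule lin)
  obtain B where B: "B \<subseteq> S" "vs1.independent B" "S \<subseteq> vs1.span B" "card B = vs1.dim S"
    using vs1.basis_exists by blast
  have span_B: "vs1.span B = vs1.span S"
    using B(1,3) vs1.span_mono vs1.span_span by blast
  have "f ` S \<subseteq> vs2.span (f ` B)"
    using B(3) by (auto simp: f.span_image)
  moreover have "vs2.independent (f ` B)"
    using B(2) inj f.dependent_inj_imageD by (auto simp: span_B)
  moreover have "card (f ` B) = card B"
    using inj B(1) vs1.span_superset by (auto intro!: card_image inj_on_subset[OF inj])
  ultimately show ?thesis
    using B(1,4) vs2.basis_card_eq_dim[of "f ` B" "f ` S"] by (metis image_mono)
qed

interpretation V: vector_space pair_smult
  by unfold_locales (auto simp: pair_smult_def smult_add_right smult_add_left)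

interpretation V2: vector_space_pair pair_smult pair_smult ..

lemma linear_pair_smultI:
  assumes "\<And>x y. f (x + y) = f x + f y" "\<And>c x. f (pair_smult c x) = pair_smult c (f x)"
  shows "Vector_Spaces.linear pair_smult pair_smult f"
  using assms V.vector_space_axioms by (simp add: Vector_Spaces.linear_iff)

lemma dim_injective_image:
  "Vector_Spaces.linear pair_smult pair_smult f \<Longrightarrow> inj f \<Longrightarrow> V.dim (f ` S) = V.dim S"
  using V2.dim_image_eq_of_inj_on inj_on_subset by blast

section \<open>Degrees outside \<open>{0, 1}\<close> do not jump\<close>

lemma G3_config_distinct_points:
  "G3_config p q lam \<Longrightarrow> distinct_points p 3 \<and> distinct_points q 3"
  by (simp add: G3_config_def distinct_points_def)

lemma G3_h0_high_degree:
  assumes da: "2 \<le> da" and c: "G3_config p q lam"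
  shows "G3_h0 da db p q lam = V.dim (forms (da - 3) \<times> forms db)"
proof -
  have pts: "distinct_points p 3" using G3_config_distinct_points[OF c] by simp
  obtain E where E: "\<forall>i<3. E i \<in> forms da \<and>
      (\<forall>j<3. form_eval da (E i) (p j) = (if j = i then 1 else 0))"
    using lagrange_basis_exists[OF pts] da by force
  define s where "s g = (\<Sum>i<3. smult (lam i * form_eval db g (q i)) (E i))" for g
  have s_forms: "s g \<in> forms da" for g
    unfolding s_def using E by (auto intro: forms_sum forms_smult)
  have s_eval: "form_eval da (s g) (p j) = lam j * form_eval db g (q j)" if "j < 3" for g j
  proof -
    have "form_eval da (s g) (p j) =
        (\<Sum>i<3. if i = j then lam i * form_eval db g (q i) else 0)"
      unfolding s_def form_eval_sum form_eval_smult using E that by (intro sum.cong) auto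
    with that show ?thesis by simp
  qed
  define T where "T x = (node_form p 3 * fst x + s (snd x), snd x)" for x
  have "(f, g) \<in> G3_sections da db p q lam \<longleftrightarrow>
      g \<in> forms db \<and> f - s g \<in> vanishing_forms da p 3" for f g
    using s_forms s_eval forms_diff[of f da "s g"] forms_add[of "f - s g" da "s g"]
    by (auto simp: G3_sections_def vanishing_forms_def form_eval_diff)
  also have "\<dots> f g \<longleftrightarrow> (f, g) \<in> T ` (forms (da - 3) \<times> forms db)" for f g
    by (force simp: vanishing_forms_eq_image[OF pts] T_def algebra_simps)
  finally have "G3_sections da db p q lam = T ` (forms (da - 3) \<times> forms db)"
    by auto
  moreover have "Vector_Spaces.linear pair_smult pair_smult T"
    by (rule linear_pair_smultI)
      (auto simp: T_def s_def pair_smult_def form_eval_add form_eval_smult algebra_simps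
        smult_add_right smult_add_left sum.distrib smult_sum_right)
  moreover have "inj T"
    using node_form_nonzero[OF pts] by (auto simp: inj_def T_def prod_eq_iff)
  ultimately show ?thesis
    by (simp add: G3_h0_def dim_injective_image)
qed

lemma G3_h0_negative_degree:
  assumes da: "da < 0" and c: "G3_config p q lam"
  shows "G3_h0 da db p q lam = V.dim (forms da \<times> forms (db - 3))"
proof -
  have pts: "distinct_points q 3" using G3_config_distinct_points[OF c] by simp
  have lam: "\<forall>i<3. lam i \<noteq> 0" using c by (simp add: G3_config_def)
  define T :: "complex poly \<times> complex poly \<Rightarrow> _"
    where "T x = (fst x, node_form q 3 * snd x)" for x
  have "(f, g) \<in> G3_sections da db p q lam \<longleftrightarrow> f = 0 \<and> g \<in> vanishing_forms db q 3" for f g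
    using da lam by (auto simp: G3_sections_def vanishing_forms_def forms_negative)
  also have "\<dots> f g \<longleftrightarrow> (f, g) \<in> T ` (forms da \<times> forms (db - 3))" for f g
    using da by (force simp: vanishing_forms_eq_image[OF pts] T_def forms_negative)
  finally have "G3_sections da db p q lam = T ` (forms da \<times> forms (db - 3))"
    by auto
  moreover have "Vector_Spaces.linear pair_smult pair_smult T"
    by (rule linear_pair_smultI) (auto simp: T_def pair_smult_def algebra_simps)
  moreover have "inj T"
    using node_form_nonzero[OF pts] by (auto simp: inj_def T_def prod_eq_iff)
  ultimately show ?thesis
    by (simp add: G3_h0_def dim_injective_image)
qed

lemma G3_config_swap: "G3_config p q lam \<Longrightarrow> G3_config q p (\<lambda>i. inverse (lam i))"
  by (simp add: G3_config_def)

lemma G3_h0_swap: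
  assumes "G3_config p q lam"
  shows "G3_h0 da db p q lam = G3_h0 db da q p (\<lambda>i. inverse (lam i))"
proof -
  have "\<forall>i<3. lam i \<noteq> 0" using assms by (simp add: G3_config_def)
  then have "G3_sections da db p q lam = prod.swap ` G3_sections db da q p (\<lambda>i. inverse (lam i))"
    by (force simp: G3_sections_def field_simps image_iff)
  moreover have "Vector_Spaces.linear pair_smult pair_smult prod.swap"
    by (rule linear_pair_smultI) (auto simp: pair_smult_def)
  ultimately show ?thesis
    by (simp add: G3_h0_def dim_injective_image)
qed

lemma G3_jumping_swap: "G3_jumping da db \<Longrightarrow> G3_jumping db da"
  unfolding G3_jumping_def using G3_h0_swap G3_config_swap by metis

lemma G3_not_jumping:
  assumes "da < 0 \<or> 2 \<le> da"
  shows "\<not> G3_jumping da db"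
  using assms G3_h0_high_degree G3_h0_negative_degree unfolding G3_jumping_def by metis

section \<open>Jumping for degrees in \<open>{0, 1}\<close>\<close>

lemma G3_h0_eq_card_basis:
  assumes "B \<subseteq> G3_sections da db p q lam" "G3_sections da db p q lam \<subseteq> V.span B"
    and "V.independent B"
  shows "G3_h0 da db p q lam = card B"
  using V.basis_card_eq_dim[OF assms] by (simp add: G3_h0_def)

lemma forms_0_eq: "forms 0 = {[:a:] | a. True}"
proof -
  have "f = [:coeff f 0:]" if "f \<in> forms 0" for f
    using that by (intro poly_eqI) (auto simp: forms_def coeff_pCons coeff_eq_0 split: nat.split)
  then show ?thesis by (auto simp: forms_def)
qed

lemma forms_1_eq: "forms 1 = {[:a, b:] | a b. True}"
proof -
  have "f = [:coeff f 0, coeff f 1:]" if "f \<in> forms 1" for f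
    using that by (intro poly_eqI) (auto simp: forms_def coeff_pCons coeff_eq_0 split: nat.split)
  then show ?thesis by (auto simp: forms_def)
qed


lemma form_eval_const [simp]: "form_eval 0 [:a:] v = a"
  by (simp add: form_eval_def)

lemma form_eval_linear [simp]: "form_eval 1 [:a, b:] v = a * snd v + b * fst v"
  by (simp add: form_eval_def)

definition std_points :: "nat \<Rightarrow> complex \<times> complex" where
  "std_points i = (if i = 0 then (0, 1) else if i = 1 then (1, 0) else (1, 1))"

definition twisted :: "nat \<Rightarrow> complex" where
  "twisted i = (if i = 2 then 2 else 1)"

lemma all_less_3: "(\<forall>i<3. P i) \<longleftrightarrow> P 0 \<and> P 1 \<and> P (2 :: nat)"
  by (auto simp: numeral_3_eq_3 numeral_2_eq_2 less_Suc_eq)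

lemma G3_config_std_points: "(\<forall>i<3. lam i \<noteq> 0) \<Longrightarrow> G3_config std_points std_points lam"
  by (simp add: G3_config_def all_less_3 proj_distinct_def std_points_def)

lemma mem_G3_sections_std_points:
  "(f, g) \<in> G3_sections da db std_points std_points lam \<longleftrightarrow> f \<in> forms da \<and> g \<in> forms db \<and>
     form_eval da f (0, 1) = lam 0 * form_eval db g (0, 1) \<and>
     form_eval da f (1, 0) = lam 1 * form_eval db g (1, 0) \<and>
     form_eval da f (1, 1) = lam 2 * form_eval db g (1, 1)"
  by (simp add: G3_sections_def all_less_3 std_points_def)

lemma G3_jumping_if_twist_changes_h0:
  assumes "G3_h0 da db std_points std_points (\<lambda>_. 1) \<noteq> G3_h0 da db std_points std_points twisted"
  shows "G3_jumping da db"
proof -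
  have "G3_config std_points std_points (\<lambda>_. 1)"
    and "G3_config std_points std_points twisted"
    by (intro G3_config_std_points; simp add: twisted_def)+
  with assms show ?thesis
    unfolding G3_jumping_def by blast
qed

lemma G3_jumping_0_0: "G3_jumping 0 0"
proof -
  let ?S = "G3_sections 0 0 std_points std_points"
  let ?x = "([:1:], [:1:]) :: complex poly \<times> complex poly"
  have "?S (\<lambda>_. 1) \<subseteq> V.span {?x}"
  proof
    fix y assume y: "y \<in> ?S (\<lambda>_. 1)"
    then obtain a b where y_eq: "y = ([:a:], [:b:])"
      by (auto simp: G3_sections_def forms_0_eq)
    with y have "y = pair_smult a ?x"
      by (simp add: mem_G3_sections_std_points pair_smult_def)
    then show "y \<in> V.span {?x}"
      by (simp add: V.span_base V.span_scale)
  qed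
  then have "G3_h0 0 0 std_points std_points (\<lambda>_. 1) = 1"
    using G3_h0_eq_card_basis[of "{?x}"]
    by (simp add: mem_G3_sections_std_points forms_0_eq zero_prod_def)
  moreover have "?S twisted \<subseteq> V.span {}"
  proof
    fix y assume y: "y \<in> ?S twisted"
    then obtain a b where y_eq: "y = ([:a:], [:b:])"
      by (auto simp: G3_sections_def forms_0_eq)
    with y have "a = 0" "b = 0"
      by (auto simp: mem_G3_sections_std_points twisted_def)
    with y_eq show "y \<in> V.span {}"
      by (simp add: zero_prod_def)
  qed
  then have "G3_h0 0 0 std_points std_points twisted = 0"
    using G3_h0_eq_card_basis[of "{}"] V.independent_empty by simp
  ultimately show ?thesis
    by (intro G3_jumping_if_twist_changes_h0) simp
qed

lemma G3_jumping_1_0: "G3_jumping 1 0"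
proof -
  let ?S = "G3_sections 1 0 std_points std_points"
  let ?x = "([:1, 1:], [:1:]) :: complex poly \<times> complex poly"
  have "?S twisted \<subseteq> V.span {?x}"
  proof
    fix y assume y: "y \<in> ?S twisted"
    then obtain a b c where y_eq: "y = ([:a, b:], [:c:])"
      by (auto simp: G3_sections_def forms_0_eq forms_1_eq)
    with y have "y = pair_smult c ?x"
      by (simp add: mem_G3_sections_std_points twisted_def pair_smult_def)
    then show "y \<in> V.span {?x}"
      by (simp add: V.span_base V.span_scale)
  qed
  then have "G3_h0 1 0 std_points std_points twisted = 1"
    using G3_h0_eq_card_basis[of "{?x}"]
    by (simp add: mem_G3_sections_std_points forms_0_eq forms_1_eq twisted_def zero_prod_def)
  moreover have "?S (\<lambda>_. 1) \<subseteq> V.span {}"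
  proof
    fix y assume y: "y \<in> ?S (\<lambda>_. 1)"
    then obtain a b c where y_eq: "y = ([:a, b:], [:c:])"
      by (auto simp: G3_sections_def forms_0_eq forms_1_eq)
    with y have "a = 0" "b = 0" "c = 0"
      by (auto simp: mem_G3_sections_std_points)
    with y_eq show "y \<in> V.span {}"
      by (simp add: zero_prod_def)
  qed
  then have "G3_h0 1 0 std_points std_points (\<lambda>_. 1) = 0"
    using G3_h0_eq_card_basis[of "{}"] V.independent_empty by simp
  ultimately show ?thesis
    by (intro G3_jumping_if_twist_changes_h0) simp
qed

lemma G3_jumping_1_1: "G3_jumping 1 1"
proof -
  let ?S = "G3_sections 1 1 std_points std_points"
  let ?x = "([:1, -1:], [:1, -1:]) :: complex poly \<times> complex poly"
  let ?u = "([:1:], [:1:]) :: complex poly \<times> complex poly"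
  let ?v = "([:0, 1:], [:0, 1:]) :: complex poly \<times> complex poly"
  have "?S twisted \<subseteq> V.span {?x}"
  proof
    fix y assume y: "y \<in> ?S twisted"
    then obtain a b c d where y_eq: "y = ([:a, b:], [:c, d:])"
      by (auto simp: G3_sections_def forms_1_eq)
    with y have "c = a" "d = b" "b = - a"
      by (auto simp: mem_G3_sections_std_points twisted_def algebra_simps add_eq_0_iff)
    with y_eq have "y = pair_smult a ?x"
      by (simp add: pair_smult_def)
    then show "y \<in> V.span {?x}"
      by (simp add: V.span_base V.span_scale)
  qed
  then have h0_twisted: "G3_h0 1 1 std_points std_points twisted = 1"
    using G3_h0_eq_card_basis[of "{?x}"]
    by (simp add: mem_G3_sections_std_points forms_1_eq twisted_def zero_prod_def)
  have "?S (\<lambda>_. 1) \<subseteq> V.span {?u, ?v}"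
  proof
    fix y assume y: "y \<in> ?S (\<lambda>_. 1)"
    then obtain a b c d where y_eq: "y = ([:a, b:], [:c, d:])"
      by (auto simp: G3_sections_def forms_1_eq)
    with y have "y = pair_smult a ?u + pair_smult b ?v"
      by (simp add: mem_G3_sections_std_points pair_smult_def)
    then show "y \<in> V.span {?u, ?v}"
      by (simp add: V.span_add V.span_base V.span_scale)
  qed
  moreover have "V.independent {?u, ?v}"
    by (auto simp: V.independent_insert V.span_singleton pair_smult_def zero_prod_def)
  ultimately have h0_untwisted: "G3_h0 1 1 std_points std_points (\<lambda>_. 1) = 2"
    using G3_h0_eq_card_basis[of "{?u, ?v}"]
    by (simp add: mem_G3_sections_std_points forms_1_eq)
  with h0_twisted show ?thesis
    by (intro G3_jumping_if_twist_changes_h0) simp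
qed

theorem mainTheorem10:
  fixes da db :: int
  shows "G3_jumping da db \<longleftrightarrow> (0 \<le> da \<and> da \<le> 1 \<and> 0 \<le> db \<and> db \<le> 1)"
proof
  assume "G3_jumping da db"
  then show "0 \<le> da \<and> da \<le> 1 \<and> 0 \<le> db \<and> db \<le> 1"
    using G3_not_jumping[of da db] G3_not_jumping[of db da] G3_jumping_swap by fastforce
next
  assume "0 \<le> da \<and> da \<le> 1 \<and> 0 \<le> db \<and> db \<le> 1"
  then have "(da = 0 \<or> da = 1) \<and> (db = 0 \<or> db = 1)" by auto
  then show "G3_jumping da db"
    using G3_jumping_0_0 G3_jumping_1_0 G3_jumping_1_1 G3_jumping_swap by auto
qed

end
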